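(* Let $X\in\mathbb{R}^{N\times d}$, and let $(W_a,A_a)$, $(W_b,A_b)\in\mathbb{R}^{d\times m}\times\mathbb{R}^{m\times m}$. Let $\lambda_1:=\max\{\|W_a\|,\|W_b\|\}$, $\lambda_2:=\max\{\|A_a\|,\|A_b\|\}$ (assume $\lambda_2>0$), and choose $\gamma>0$ with $\gamma_0:=\gamma\lambda_2<1$. Then for $i\in\{a,b\}$ the equation $Z_i=\sigma(\gamma Z_iA_i+\sigma(XW_i))$ has a unique solution $Z_i\in\mathbb{R}^{N\times m}$, and $$\|Z_a-Z_b\|\le\frac{\|X\|_F}{1-\gamma_0}\left[\frac{\gamma_0}{1-\gamma_0}\frac{\lambda_1}{\lambda_2}\|A_a-A_b\|+\|W_a-W_b\|\right].$$
   Context: $\sigma(u)=\max\{0,u\}$ applied entrywise. $\|\cdot\|$ is the spectral norm and $\|\cdot\|_F$ the Frobenius norm. *)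

theory Defs
  imports "HOL-Analysis.Analysis"
begin

definition spec_norm :: "real^'n^'m \<Rightarrow> real" where
  "spec_norm A = onorm (\<lambda>x. A *v x)"

definition frob_norm :: "real^'n^'m \<Rightarrow> real" where
  "frob_norm A = sqrt (\<Sum>i\<in>UNIV. \<Sum>j\<in>UNIV. (A $ i $ j)\<^sup>2)"

definition relu :: "real^'n^'m \<Rightarrow> real^'n^'m" where
  "relu A = (\<chi> i j. max 0 (A $ i $ j))"

end

theory Submission
  imports Defs
begin

text \<open>
  The norm of a matrix in HOL-Analysis is its Frobenius norm, and a product \<open>Z ** A\<close> acts
  row by row as \<open>x \<mapsto> x v* A\<close>, so \<open>\<parallel>Z ** A\<parallel>\<^sub>F \<le> \<parallel>A\<parallel> \<parallel>Z\<parallel>\<^sub>F\<close>. Together with the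
  1-Lipschitz property of ReLU this yields a single estimate comparing the layer maps
  \<open>Z \<mapsto> \<sigma>(\<gamma> Z A + B)\<close> for two parameter sets. For equal parameters it says the map is a
  contraction with constant \<open>\<gamma>\<parallel>A\<parallel> \<le> \<gamma>\<^sub>0 < 1\<close>, so Banach's fixed point theorem gives the
  unique solution; evaluated at the two fixed points it gives
  \<open>(1 - \<gamma>\<^sub>0)\<parallel>Z\<^sub>a - Z\<^sub>b\<parallel>\<^sub>F \<le> \<gamma>\<parallel>A\<^sub>a - A\<^sub>b\<parallel>\<parallel>Z\<^sub>b\<parallel>\<^sub>F + \<parallel>B\<^sub>a - B\<^sub>b\<parallel>\<^sub>F\<close>, and against the zero
  parameters it gives \<open>(1 - \<gamma>\<^sub>0)\<parallel>Z\<^sub>b\<parallel>\<^sub>F \<le> \<parallel>B\<^sub>b\<parallel>\<^sub>F\<close>. The spectral norm of \<open>Z\<^sub>a - Z\<^sub>b\<close> is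
  bounded by its Frobenius norm.
\<close>

lemma spec_norm_nonneg: "0 \<le> spec_norm (A::real^'n^'m)"
  unfolding spec_norm_def
  using onorm_pos_le[OF matrix_vector_mul_bounded_linear[of A]] by simp

lemma spec_norm_zero [simp]: "spec_norm (0::real^'n^'m) = 0"
  by (simp add: spec_norm_def onorm_zero)

lemma norm_matrix_vector_mult_le: "norm ((A::real^'n^'m) *v x) \<le> spec_norm A * norm x"
  unfolding spec_norm_def
  using onorm[OF matrix_vector_mul_bounded_linear[of A]] by simp

lemma norm_vector_matrix_mult_le: "norm ((x::real^'m) v* (A::real^'n^'m)) \<le> spec_norm A * norm x"
proof -
  let ?y = "x v* A"
  have "norm ?y * norm ?y = inner x (A *v ?y)"
    using power2_norm_eq_inner[of ?y] dot_lmul_matrix by (simp add: power2_eq_square)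
  also have "\<dots> \<le> norm x * norm (A *v ?y)"
    by (rule norm_cauchy_schwarz)
  also have "\<dots> \<le> (spec_norm A * norm x) * norm ?y"
    using mult_left_mono[OF norm_matrix_vector_mult_le[of A ?y], of "norm x"] by (simp add: ac_simps)
  finally show ?thesis
    using spec_norm_nonneg[of A] by (cases "norm ?y = 0") auto
qed

lemma norm_matrix_mult_le: "norm ((Z::real^'k^'n) ** (A::real^'m^'k)) \<le> spec_norm A * norm Z"
proof -
  have "norm (Z ** A) \<le> norm (spec_norm A *\<^sub>R Z)"
  proof (rule norm_le_componentwise_cart)
    fix i
    have "(Z ** A) $ i = Z $ i v* A"
      by (simp add: matrix_matrix_mult_def vector_matrix_mult_def vec_eq_iff)
    then show "norm ((Z ** A) $ i) \<le> norm ((spec_norm A *\<^sub>R Z) $ i)"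
      using norm_vector_matrix_mult_le[of "Z $ i" A] spec_norm_nonneg[of A] by simp
  qed
  then show ?thesis
    using spec_norm_nonneg[of A] by simp
qed

lemma spec_norm_le_norm: "spec_norm (D::real^'m^'n) \<le> norm D"
  unfolding spec_norm_def
proof (rule onorm_le)
  fix x
  let ?v = "(\<chi> i. norm (D $ i)) :: real^'n"
  have "norm (D *v x) \<le> norm (norm x *\<^sub>R ?v)"
  proof (rule norm_le_componentwise_cart)
    fix i
    show "norm ((D *v x) $ i) \<le> norm ((norm x *\<^sub>R ?v) $ i)"
      using Cauchy_Schwarz_ineq2[of "D $ i" x] by (simp add: matrix_mult_dot mult.commute)
  qed
  moreover have "norm ?v = norm D"
    unfolding norm_vec_def by simp
  ultimately show "norm (D *v x) \<le> norm D * norm x"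
    by (simp add: mult.commute)
qed

lemma frob_norm_eq_norm: "frob_norm (X::real^'m^'n) = norm X"
  unfolding frob_norm_def norm_vec_def L2_set_def
  by (simp add: real_norm_def sum_nonneg)

lemma matrix_mult_diff_rdistrib: "((Z::real^'k^'n) - Z') ** (A::real^'m^'k) = Z ** A - Z' ** A"
  by (simp add: matrix_matrix_mult_def vec_eq_iff sum_subtractf algebra_simps)

lemma matrix_mult_diff_ldistrib: "(Z::real^'k^'n) ** ((A::real^'m^'k) - A') = Z ** A - Z ** A'"
  by (simp add: matrix_matrix_mult_def vec_eq_iff sum_subtractf algebra_simps)

lemma norm_relu_diff_le: "norm (relu (U::real^'m^'n) - relu V) \<le> norm (U - V)"
proof (rule norm_le_componentwise_cart)
  fix i
  show "norm ((relu U - relu V) $ i) \<le> norm ((U - V) $ i)"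
    by (rule norm_le_componentwise_cart) (simp add: relu_def)
qed

lemma relu_zero [simp]: "relu 0 = 0"
  by (simp add: relu_def vec_eq_iff)

lemma norm_relu_le: "norm (relu (U::real^'m^'n)) \<le> norm U"
  using norm_relu_diff_le[of U 0] by simp

lemma norm_relu_matrix_mult_diff_le:
  "norm (relu ((X::real^'d^'n) ** W) - relu (X ** W')) \<le> spec_norm (W - W') * norm X"
  using norm_relu_diff_le[of "X ** W" "X ** W'"] norm_matrix_mult_le[of X "W - W'"]
  by (simp add: matrix_mult_diff_ldistrib)

lemma norm_relu_layer_diff_le:
  fixes Z Z' :: "real^'j^'n" and A A' :: "real^'k^'j" and B B' :: "real^'k^'n"
  assumes "gam \<ge> 0"
  shows "norm (relu (gam *\<^sub>R (Z ** A) + B) - relu (gam *\<^sub>R (Z' ** A') + B'))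
    \<le> gam * (spec_norm A * norm (Z - Z') + spec_norm (A - A') * norm Z') + norm (B - B')"
proof -
  have decomp: "(gam *\<^sub>R (Z ** A) + B) - (gam *\<^sub>R (Z' ** A') + B')
      = gam *\<^sub>R ((Z - Z') ** A + Z' ** (A - A')) + (B - B')"
    by (simp add: matrix_mult_diff_rdistrib matrix_mult_diff_ldistrib algebra_simps)
  have "norm ((Z - Z') ** A + Z' ** (A - A'))
      \<le> norm ((Z - Z') ** A) + norm (Z' ** (A - A'))"
    by (rule norm_triangle_ineq)
  also have "\<dots> \<le> spec_norm A * norm (Z - Z') + spec_norm (A - A') * norm Z'"
    by (intro add_mono norm_matrix_mult_le)
  finally have "norm (gam *\<^sub>R ((Z - Z') ** A + Z' ** (A - A')))
      \<le> gam * (spec_norm A * norm (Z - Z') + spec_norm (A - A') * norm Z')"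
    using assms by (simp add: mult_left_mono)
  then have "norm ((gam *\<^sub>R (Z ** A) + B) - (gam *\<^sub>R (Z' ** A') + B'))
      \<le> gam * (spec_norm A * norm (Z - Z') + spec_norm (A - A') * norm Z') + norm (B - B')"
    unfolding decomp using norm_triangle_ineq add_right_mono order_trans by blast
  then show ?thesis
    using norm_relu_diff_le order_trans by blast
qed

lemma relu_layer_unique_fixpoint:
  fixes A :: "real^'k^'k" and B :: "real^'k^'n"
  assumes "gam \<ge> 0" and "gam * spec_norm A < 1"
  shows "\<exists>!Z. Z = relu (gam *\<^sub>R (Z ** A) + B)"
proof -
  have "\<exists>!Z. relu (gam *\<^sub>R (Z ** A) + B) = Z"
  proof (rule banach_fix_type[where c = "gam * spec_norm A"])
    show "0 \<le> gam * spec_norm A"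
      using assms(1) spec_norm_nonneg by (rule mult_nonneg_nonneg)
    show "\<forall>Z Z'. dist (relu (gam *\<^sub>R (Z ** A) + B)) (relu (gam *\<^sub>R (Z' ** A) + B))
        \<le> gam * spec_norm A * dist Z Z'"
    proof (intro allI)
      fix Z Z' :: "real^'k^'n"
      show "dist (relu (gam *\<^sub>R (Z ** A) + B)) (relu (gam *\<^sub>R (Z' ** A) + B))
          \<le> gam * spec_norm A * dist Z Z'"
        using norm_relu_layer_diff_le[OF assms(1), of Z A B Z' A B]
        by (simp add: dist_norm mult.assoc)
    qed
  qed (use assms in simp)
  then show ?thesis
    by metis
qed

lemma norm_relu_layer_fixpoint_diff_le:
  fixes Za Zb :: "real^'k^'n" and Aa Ab :: "real^'k^'k" and Ba Bb :: "real^'k^'n"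
  assumes Za: "Za = relu (gam *\<^sub>R (Za ** Aa) + Ba)"
    and Zb: "Zb = relu (gam *\<^sub>R (Zb ** Ab) + Bb)"
    and "gam \<ge> 0" and "spec_norm Aa \<le> L" and "spec_norm Ab \<le> L" and "gam * L < 1"
  shows "norm (Za - Zb)
    \<le> (gam * spec_norm (Aa - Ab) * (norm Bb / (1 - gam * L)) + norm (Ba - Bb)) / (1 - gam * L)"
proof -
  have contract: "gam * (spec_norm A * r) \<le> gam * L * r"
    if "spec_norm A \<le> L" and "r \<ge> 0" for A :: "real^'k^'k" and r
    using that \<open>gam \<ge> 0\<close> by (simp add: mult_left_mono mult_right_mono mult.assoc)
  have "norm Zb \<le> gam * L * norm Zb + norm Bb"
    using norm_relu_layer_diff_le[OF \<open>gam \<ge> 0\<close>, of Zb Ab Bb 0 0 0]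
      contract[OF \<open>spec_norm Ab \<le> L\<close> norm_ge_zero[of Zb]]
    by (simp flip: Zb)
  then have Zb_bound: "norm Zb \<le> norm Bb / (1 - gam * L)"
    using \<open>gam * L < 1\<close> by (simp add: field_simps)
  have "norm (Za - Zb) \<le> gam * L * norm (Za - Zb) + gam * spec_norm (Aa - Ab) * norm Zb + norm (Ba - Bb)"
    using norm_relu_layer_diff_le[OF \<open>gam \<ge> 0\<close>, of Za Aa Ba Zb Ab Bb]
      contract[OF \<open>spec_norm Aa \<le> L\<close> norm_ge_zero[of "Za - Zb"]]
    by (simp flip: Za Zb add: distrib_left mult.assoc)
  moreover have "gam * spec_norm (Aa - Ab) * norm Zb \<le> gam * spec_norm (Aa - Ab) * (norm Bb / (1 - gam * L))"
    by (intro mult_left_mono Zb_bound mult_nonneg_nonneg \<open>gam \<ge> 0\<close> spec_norm_nonneg)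
  ultimately have "norm (Za - Zb) * (1 - gam * L)
      \<le> gam * spec_norm (Aa - Ab) * (norm Bb / (1 - gam * L)) + norm (Ba - Bb)"
    by (simp add: algebra_simps)
  then show ?thesis
    using \<open>gam * L < 1\<close> by (simp add: pos_le_divide_eq)
qed

theorem lemma4:
  fixes X :: "real^'d^'N"
    and Wa Wb :: "real^'m^'d"
    and Aa Ab :: "real^'m^'m"
    and gam lam1 lam2 gam0 :: real
  assumes "lam1 = max (spec_norm Wa) (spec_norm Wb)"
    and "lam2 = max (spec_norm Aa) (spec_norm Ab)"
    and "lam2 > 0"
    and "gam > 0"
    and "gam0 = gam * lam2"
    and "gam0 < 1"
  shows "(\<exists>!Z::real^'m^'N. Z = relu (gam *\<^sub>R (Z ** Aa) + relu (X ** Wa)))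
       \<and> (\<exists>!Z::real^'m^'N. Z = relu (gam *\<^sub>R (Z ** Ab) + relu (X ** Wb)))
       \<and> (\<forall>Za Zb :: real^'m^'N.
            Za = relu (gam *\<^sub>R (Za ** Aa) + relu (X ** Wa)) \<longrightarrow>
            Zb = relu (gam *\<^sub>R (Zb ** Ab) + relu (X ** Wb)) \<longrightarrow>
            spec_norm (Za - Zb) \<le> frob_norm X / (1 - gam0) *
              (gam0 / (1 - gam0) * (lam1 / lam2) * spec_norm (Aa - Ab) + spec_norm (Wa - Wb)))"
proof (intro conjI allI impI)
  have gam: "gam \<ge> 0" "gam * lam2 < 1" and Aa: "spec_norm Aa \<le> lam2" and Ab: "spec_norm Ab \<le> lam2"
    using assms by auto
  show "\<exists>!Z::real^'m^'N. Z = relu (gam *\<^sub>R (Z ** Aa) + relu (X ** Wa))"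
    using relu_layer_unique_fixpoint gam Aa mult_left_mono order.strict_trans1 by metis
  show "\<exists>!Z::real^'m^'N. Z = relu (gam *\<^sub>R (Z ** Ab) + relu (X ** Wb))"
    using relu_layer_unique_fixpoint gam Ab mult_left_mono order.strict_trans1 by metis
  fix Za Zb :: "real^'m^'N"
  assume "Za = relu (gam *\<^sub>R (Za ** Aa) + relu (X ** Wa))"
    and "Zb = relu (gam *\<^sub>R (Zb ** Ab) + relu (X ** Wb))"
  then have "norm (Za - Zb) \<le> (gam * spec_norm (Aa - Ab) * (norm (relu (X ** Wb)) / (1 - gam0))
      + norm (relu (X ** Wa) - relu (X ** Wb))) / (1 - gam0)"
    using norm_relu_layer_fixpoint_diff_le gam Aa Ab assms(5) by blast
  also have "\<dots> \<le> (gam * spec_norm (Aa - Ab) * (lam1 * norm X / (1 - gam0))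
      + spec_norm (Wa - Wb) * norm X) / (1 - gam0)"
  proof -
    have "norm (relu (X ** Wb)) \<le> lam1 * norm X"
      using norm_relu_le[of "X ** Wb"] norm_matrix_mult_le[of X Wb] assms(1)
      by (meson max.cobounded2 mult_right_mono norm_ge_zero order_trans)
    then show ?thesis
      using norm_relu_matrix_mult_diff_le[of X Wa Wb] gam spec_norm_nonneg[of "Aa - Ab"] assms(5,6)
      by (intro divide_right_mono add_mono mult_left_mono) auto
  qed
  also have "\<dots> = frob_norm X / (1 - gam0) *
      (gam0 / (1 - gam0) * (lam1 / lam2) * spec_norm (Aa - Ab) + spec_norm (Wa - Wb))"
    using assms(3,5,6) by (simp add: frob_norm_eq_norm field_simps)
  finally show "spec_norm (Za - Zb) \<le> frob_norm X / (1 - gam0) *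
      (gam0 / (1 - gam0) * (lam1 / lam2) * spec_norm (Aa - Ab) + spec_norm (Wa - Wb))"
    using spec_norm_le_norm[of "Za - Zb"] by linarith
qed

end
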